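(* Let $K$ be a compact line, $(F_i)_{i\in I}$ a weak*-null family in $\mathrm{NBV}(K)$ with $\mu_i$ the measure associated to $F_i$, $J$ a convex subset of $K$ and $S$ a finite subset of $J$. If $J$ has more than one point then $\sum_{t\in S}|F_i(t)|\le|\mu_i|(J)\mod c_0(I)$, and if $J$ is open then $\sum_{t\in S}|F_i(t)|\le\tfrac12|\mu_i|(J)\mod c_0(I)$.
   Context: A compact line is a totally ordered set which is compact in its order topology. $J\subseteq K$ is convex if $t\le s$ in $J$ implies $[t,s]\subseteq J$. $\mathrm{NBV}(K)$ is the space of right-continuous real maps of bounded variation on $K$; each finite signed regular Borel measure $\mu$ on $K$ corresponds isometrically to $F_\mu(t)=\mu([\min K,t])$, and the measure associated to $F$ is the $\mu$ with $F_\mu=F$; $|\mu|$ is its total variation measure. $c_0(I)$ is the set of real families with $\{i:|a_i|\ge\varepsilon\}$ finite for all $\varepsilon>0$ (written $\lim_{i\in I}a_i=0$). $(F_i)$ is weak*-null if $\lim_i\int_Kf\,d\mu_i=0$ for all $f\in C(K)$. "$x_i\le y_i\mod c_0(I)$" means $\{i:x_i\ge y_i+\varepsilon\}$ is finite for every $\varepsilon>0$. *)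

theory Defs
  imports "HOL-Analysis.Analysis"
begin

text \<open>The compact line K is modelled as a type 'a of class linorder_topology with
  compact UNIV; then min K exists and [min K, t] = {..t}.\<close>

definition ord_convex :: "'a::linorder set \<Rightarrow> bool" where
  "ord_convex J \<longleftrightarrow> (\<forall>t\<in>J. \<forall>s\<in>J. t \<le> s \<longrightarrow> {t..s} \<subseteq> J)"

definition right_continuous :: "('a::linorder_topology \<Rightarrow> real) \<Rightarrow> bool" where
  "right_continuous F \<longleftrightarrow> (\<forall>t. continuous (at_right t) F)"

definition bounded_variation :: "('a::linorder \<Rightarrow> real) \<Rightarrow> bool" where
  "bounded_variation F \<longleftrightarrow> (\<exists>B. \<forall>(n::nat) (t::nat \<Rightarrow> 'a).
      (\<forall>k<n. t k \<le> t (Suc k)) \<longrightarrow> (\<Sum>k<n. \<bar>F (t (Suc k)) - F (t k)\<bar>) \<le> B)"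

definition NBV :: "('a::linorder_topology \<Rightarrow> real) set" where
  "NBV = {F. right_continuous F \<and> bounded_variation F}"

definition regular_borel_measure :: "'a::topological_space measure \<Rightarrow> bool" where
  "regular_borel_measure M \<longleftrightarrow> finite_measure M \<and> sets M = sets borel \<and>
     (\<forall>B\<in>sets M.
        measure M B = (SUP C\<in>{C. compact C \<and> C \<subseteq> B}. measure M C) \<and>
        measure M B = (INF U\<in>{U. open U \<and> B \<subseteq> U}. measure M U))"

text \<open>A finite signed regular Borel measure mu is represented by its Jordan
  decomposition (mu+, mu-): two finite regular Borel measures that are mutually singular.\<close>
type_synonym 'a smeasure = "'a measure \<times> 'a measure"

definition signed_regular_measure :: "'a::topological_space smeasure \<Rightarrow> bool" where
  "signed_regular_measure \<mu> \<longleftrightarrow> regular_borel_measure (fst \<mu>) \<and> regular_borel_measure (snd \<mu>) \<and>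
     (\<exists>A\<in>sets borel. measure (fst \<mu>) (- A) = 0 \<and> measure (snd \<mu>) A = 0)"

definition smeasure_of :: "'a smeasure \<Rightarrow> 'a set \<Rightarrow> real" where
  "smeasure_of \<mu> B = measure (fst \<mu>) B - measure (snd \<mu>) B"

definition total_variation :: "'a smeasure \<Rightarrow> 'a set \<Rightarrow> real" where
  "total_variation \<mu> B = measure (fst \<mu>) B + measure (snd \<mu>) B"

definition sintegral :: "'a smeasure \<Rightarrow> ('a \<Rightarrow> real) \<Rightarrow> real" where
  "sintegral \<mu> f = integral\<^sup>L (fst \<mu>) f - integral\<^sup>L (snd \<mu>) f"

definition associated_measure :: "('a::linorder_topology \<Rightarrow> real) \<Rightarrow> 'a smeasure \<Rightarrow> bool" where
  "associated_measure F \<mu> \<longleftrightarrow> signed_regular_measure \<mu> \<and> (\<forall>t. F t = smeasure_of \<mu> {..t})"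

definition c0_null :: "'i set \<Rightarrow> ('i \<Rightarrow> real) \<Rightarrow> bool" where
  "c0_null I a \<longleftrightarrow> (\<forall>\<epsilon>>0. finite {i\<in>I. \<bar>a i\<bar> \<ge> \<epsilon>})"

definition le_mod_c0 :: "'i set \<Rightarrow> ('i \<Rightarrow> real) \<Rightarrow> ('i \<Rightarrow> real) \<Rightarrow> bool" where
  "le_mod_c0 I x y \<longleftrightarrow> (\<forall>\<epsilon>>0. finite {i\<in>I. x i \<ge> y i + \<epsilon>})"

definition weak_star_null :: "'i set \<Rightarrow> ('i \<Rightarrow> 'a::topological_space smeasure) \<Rightarrow> bool" where
  "weak_star_null I \<mu> \<longleftrightarrow> (\<forall>f::'a \<Rightarrow> real. continuous_on UNIV f \<longrightarrow> c0_null I (\<lambda>i. sintegral (\<mu> i) f))"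

end

theory Submission
  imports Defs
begin

(* If f is a Urysohn function, equal to 1 on a closed set C and to 0 off an open set U
   containing C, then |mu(X) - integral f dmu| <= |mu|((U \<union> X) - C) whenever C \<subseteq> X.
   Since integral f dmu_i is c_0-null, |mu_i(X)| <= |mu_i|((U \<union> X) - C) mod c_0(I).
   For X = [min K, t] this bounds |F_i(t)| by the |mu_i|-mass of a right neighbourhood
   U - [min K, t] or a left neighbourhood [min K, t] - C of t. Such neighbourhoods are chosen
   inside J and pairwise disjoint: one per point of S when J has two points (after adding two
   points of J to S), one on each side of every point when J is open. Between consecutive
   points p < b of S one takes U = [min K, v), C = [min K, v] for some p < v < b, or
   U = C = [min K, p] if there is no such v, as then [min K, p] = [min K, b) is clopen. *)

lemma le_mod_c0_of_le:
  assumes "\<And>i. i \<in> I \<Longrightarrow> x i \<le> y i"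
  shows "le_mod_c0 I x y"
proof -
  have "{i\<in>I. x i \<ge> y i + e} = {}" if "e > 0" for e :: real
    using assms that by force
  then show ?thesis
    unfolding le_mod_c0_def by (metis finite.emptyI)
qed

lemma le_mod_c0_mono:
  assumes "le_mod_c0 I x y"
    and "\<And>i. i \<in> I \<Longrightarrow> x' i \<le> x i" and "\<And>i. i \<in> I \<Longrightarrow> y i \<le> y' i"
  shows "le_mod_c0 I x' y'"
  unfolding le_mod_c0_def
proof (intro allI impI)
  fix e :: real
  assume "e > 0"
  have "{i\<in>I. x' i \<ge> y' i + e} \<subseteq> {i\<in>I. x i \<ge> y i + e}"
    using assms(2,3) by force
  then show "finite {i\<in>I. x' i \<ge> y' i + e}"
    using assms(1) \<open>e > 0\<close> unfolding le_mod_c0_def by (meson finite_subset)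
qed

lemma le_mod_c0_of_c0_null:
  assumes "c0_null I a" and "\<And>i. i \<in> I \<Longrightarrow> x i \<le> \<bar>a i\<bar> + y i"
  shows "le_mod_c0 I x y"
  unfolding le_mod_c0_def
proof (intro allI impI)
  fix e :: real
  assume "e > 0"
  have "{i\<in>I. x i \<ge> y i + e} \<subseteq> {i\<in>I. \<bar>a i\<bar> \<ge> e}"
    using assms(2) by force
  then show "finite {i\<in>I. x i \<ge> y i + e}"
    using assms(1) \<open>e > 0\<close> unfolding c0_null_def by (meson finite_subset)
qed

lemma le_mod_c0_add:
  assumes "le_mod_c0 I x y" and "le_mod_c0 I x' y'"
  shows "le_mod_c0 I (\<lambda>i. x i + x' i) (\<lambda>i. y i + y' i)"
  unfolding le_mod_c0_def
proof (intro allI impI)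
  fix e :: real
  assume "e > 0"
  have "{i\<in>I. x i + x' i \<ge> y i + y' i + e}
      \<subseteq> {i\<in>I. x i \<ge> y i + e/2} \<union> {i\<in>I. x' i \<ge> y' i + e/2}"
    by auto
  moreover have "finite ({i\<in>I. x i \<ge> y i + e/2} \<union> {i\<in>I. x' i \<ge> y' i + e/2})"
    using assms \<open>e > 0\<close> unfolding le_mod_c0_def by simp
  ultimately show "finite {i\<in>I. x i + x' i \<ge> y i + y' i + e}"
    by (rule finite_subset)
qed

lemma le_mod_c0_average:
  assumes "le_mod_c0 I x y" and "le_mod_c0 I x y'"
  shows "le_mod_c0 I x (\<lambda>i. (y i + y' i) / 2)"
  unfolding le_mod_c0_def
proof (intro allI impI)
  fix e :: real
  assume "e > 0"
  have "{i\<in>I. x i \<ge> (y i + y' i) / 2 + e} \<subseteq> {i\<in>I. x i \<ge> y i + e} \<union> {i\<in>I. x i \<ge> y' i + e}"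
  proof (intro subsetI)
    fix i
    assume i: "i \<in> {i\<in>I. x i \<ge> (y i + y' i) / 2 + e}"
    then have "x i \<ge> y i + e \<or> x i \<ge> y' i + e"
      by simp argo
    with i show "i \<in> {i\<in>I. x i \<ge> y i + e} \<union> {i\<in>I. x i \<ge> y' i + e}"
      by blast
  qed
  moreover have "finite ({i\<in>I. x i \<ge> y i + e} \<union> {i\<in>I. x i \<ge> y' i + e})"
    using assms \<open>e > 0\<close> unfolding le_mod_c0_def by simp
  ultimately show "finite {i\<in>I. x i \<ge> (y i + y' i) / 2 + e}"
    by (rule finite_subset)
qed

lemma signed_regular_measure_finite:
  assumes "signed_regular_measure \<mu>"
  shows "finite_measure (fst \<mu>)" "sets (fst \<mu>) = sets borel"
    "finite_measure (snd \<mu>)" "sets (snd \<mu>) = sets borel"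
  using assms unfolding signed_regular_measure_def regular_borel_measure_def by auto

lemma total_variation_nonneg: "total_variation \<mu> A \<ge> 0"
  unfolding total_variation_def by simp

lemma total_variation_mono:
  assumes "signed_regular_measure \<mu>" "A \<subseteq> B" "B \<in> sets borel"
  shows "total_variation \<mu> A \<le> total_variation \<mu> B"
proof -
  note fin = signed_regular_measure_finite[OF assms(1)]
  have "measure (fst \<mu>) A \<le> measure (fst \<mu>) B" "measure (snd \<mu>) A \<le> measure (snd \<mu>) B"
    using finite_measure.finite_measure_mono[OF fin(1) assms(2)]
      finite_measure.finite_measure_mono[OF fin(3) assms(2)] fin(2,4) assms(3) by auto
  then show ?thesis
    unfolding total_variation_def by simp
qed

lemma total_variation_Un:
  assumes "signed_regular_measure \<mu>" "A \<in> sets borel" "B \<in> sets borel" "A \<inter> B = {}"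
  shows "total_variation \<mu> (A \<union> B) = total_variation \<mu> A + total_variation \<mu> B"
proof -
  note fin = signed_regular_measure_finite[OF assms(1)]
  have "measure (fst \<mu>) (A \<union> B) = measure (fst \<mu>) A + measure (fst \<mu>) B"
    "measure (snd \<mu>) (A \<union> B) = measure (snd \<mu>) A + measure (snd \<mu>) B"
    using finite_measure.finite_measure_Union[OF fin(1)]
      finite_measure.finite_measure_Union[OF fin(3)] fin(2,4) assms(2-4) by auto
  then show ?thesis
    unfolding total_variation_def by simp
qed

lemma total_variation_add_le:
  assumes "signed_regular_measure \<mu>" "A \<in> sets borel" "B \<in> sets borel" "G \<in> sets borel"
    and "A \<inter> B = {}" "A \<union> B \<subseteq> G"
  shows "total_variation \<mu> A + total_variation \<mu> B \<le> total_variation \<mu> G"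
  using total_variation_Un[OF assms(1-3,5)] total_variation_mono[OF assms(1,6,4)] by simp

lemma Urysohn_compact_t2:
  fixes C U :: "'a::t2_space set"
  assumes "compact (UNIV :: 'a set)" and "closed C" "open U" "C \<subseteq> U"
  obtains f :: "'a \<Rightarrow> real" where "continuous_on UNIV f" "\<And>x. 0 \<le> f x" "\<And>x. f x \<le> 1"
    "\<And>x. x \<in> C \<Longrightarrow> f x = 1" "\<And>x. x \<notin> U \<Longrightarrow> f x = 0"
proof -
  have "Hausdorff_space (euclidean :: 'a topology)"
    unfolding Hausdorff_space_def using hausdorff by (fastforce simp: disjnt_def)
  then have "normal_space (euclidean :: 'a topology)"
    using compact_Hausdorff_or_regular_imp_normal_space[of "euclidean :: 'a topology"] assms(1)
    by (simp add: compact_space_def)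
  then obtain f where f: "continuous_map euclidean (top_of_set {0..1::real}) f"
      "f ` (- U) \<subseteq> {0}" "f ` C \<subseteq> {1}"
    using Urysohn_lemma[of euclidean "-U" C 0 1] assms(2-4) by (auto simp: disjnt_def closed_Compl)
  then have cont: "continuous_on UNIV f" and range: "\<And>x. f x \<in> {0..1}"
    unfolding continuous_map_in_subtopology by auto
  show ?thesis
  proof (rule that[OF cont])
    fix x
    show "0 \<le> f x" "f x \<le> 1"
      using range[of x] by auto
    show "x \<in> C \<Longrightarrow> f x = 1" "x \<notin> U \<Longrightarrow> f x = 0"
      using f(2,3) by blast+
  qed
qed

lemma abs_measure_diff_integral_le:
  fixes M :: "'a::topological_space measure"
  assumes M: "finite_measure M" "sets M = sets borel"
    and f: "continuous_on UNIV f" "\<And>x. 0 \<le> f x" "\<And>x. f x \<le> (1::real)"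
      "\<And>x. x \<in> C \<Longrightarrow> f x = 1" "\<And>x. x \<notin> U \<Longrightarrow> f x = 0"
    and "C \<subseteq> X" "X \<in> sets borel" "Z \<in> sets borel" "(U \<union> X) - C \<subseteq> Z"
  shows "\<bar>measure M X - integral\<^sup>L M f\<bar> \<le> measure M Z"
proof -
  interpret finite_measure M by fact
  have space: "space M = UNIV"
    using sets_eq_imp_space_eq[OF M(2)] by simp
  have "f \<in> borel_measurable M"
    using borel_measurable_continuous_onI[OF f(1)] measurable_cong_sets[OF M(2) refl] by blast
  then have int_f: "integrable M f"
    by (intro integrable_const_bound[where B=1]) (use f(2,3) in auto)
  have int_X: "integrable M (indicator X :: 'a \<Rightarrow> real)"
    and int_Z: "integrable M (indicator Z :: 'a \<Rightarrow> real)"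
    using assms(9,10) M(2) space by (auto simp: integrable_indicator_iff less_top[symmetric])
  have "\<bar>measure M X - integral\<^sup>L M f\<bar> = \<bar>integral\<^sup>L M (\<lambda>x. indicator X x - f x)\<bar>"
    using int_X int_f space by simp
  also have "\<dots> \<le> integral\<^sup>L M (\<lambda>x. \<bar>indicator X x - f x\<bar>)"
    by (rule integral_abs_bound)
  also have "\<dots> \<le> integral\<^sup>L M (indicator Z)"
  proof (rule integral_mono)
    fix x
    show "\<bar>indicator X x - f x\<bar> \<le> (indicator Z x :: real)"
      using f(2-5)[of x] assms(8,11) by (auto simp: indicator_def)
  qed (use int_X int_f int_Z in auto)
  also have "\<dots> = measure M Z"
    using space by simp
  finally show ?thesis .
qed

lemma weak_star_null_abs_smeasure_le_mod_c0:
  fixes \<mu> :: "'i \<Rightarrow> 'a::t2_space smeasure"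
  assumes "compact (UNIV :: 'a set)" and signed: "\<forall>i\<in>I. signed_regular_measure (\<mu> i)"
    and "weak_star_null I \<mu>"
    and "closed C" "open U" "C \<subseteq> U" "C \<subseteq> X"
    and "X \<in> sets borel" "Z \<in> sets borel" "(U \<union> X) - C \<subseteq> Z"
  shows "le_mod_c0 I (\<lambda>i. \<bar>smeasure_of (\<mu> i) X\<bar>) (\<lambda>i. total_variation (\<mu> i) Z)"
proof -
  obtain f :: "'a \<Rightarrow> real" where f: "continuous_on UNIV f" "\<And>x. 0 \<le> f x" "\<And>x. f x \<le> 1"
    "\<And>x. x \<in> C \<Longrightarrow> f x = 1" "\<And>x. x \<notin> U \<Longrightarrow> f x = 0"
    using Urysohn_compact_t2[OF assms(1,4-6)] by blast
  have "c0_null I (\<lambda>i. sintegral (\<mu> i) f)"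
    using assms(3) f(1) unfolding weak_star_null_def by blast
  then show ?thesis
  proof (rule le_mod_c0_of_c0_null)
    fix i
    assume "i \<in> I"
    note fin = signed_regular_measure_finite[OF bspec[OF signed this]]
    have "\<bar>measure (fst (\<mu> i)) X - integral\<^sup>L (fst (\<mu> i)) f\<bar> \<le> measure (fst (\<mu> i)) Z"
      by (rule abs_measure_diff_integral_le[OF fin(1,2) f assms(7-10)])
    moreover have "\<bar>measure (snd (\<mu> i)) X - integral\<^sup>L (snd (\<mu> i)) f\<bar> \<le> measure (snd (\<mu> i)) Z"
      by (rule abs_measure_diff_integral_le[OF fin(3,4) f assms(7-10)])
    ultimately
    show "\<bar>smeasure_of (\<mu> i) X\<bar> \<le> \<bar>sintegral (\<mu> i) f\<bar> + total_variation (\<mu> i) Z"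
      unfolding smeasure_of_def sintegral_def total_variation_def by linarith
  qed
qed

lemma down_closed_in_borel:
  fixes D :: "'a::linorder_topology set"
  assumes "\<And>x y. x \<in> D \<Longrightarrow> y \<le> x \<Longrightarrow> y \<in> D"
  shows "D \<in> sets borel"
proof (cases "\<exists>g\<in>D. \<forall>x\<in>D. x \<le> g")
  case True
  then obtain g where "g \<in> D" "\<forall>x\<in>D. x \<le> g"
    by blast
  with assms have "D = {..g}"
    by blast
  then show ?thesis
    by simp
next
  case False
  with assms have "D = (\<Union>x\<in>D. {..<x})"
    by (auto simp: not_le)
  moreover have "open (\<Union>x\<in>D. {..<x})"
    by (intro open_UN) simp
  ultimately show ?thesis
    by (metis borel_open)
qed

lemma ord_convex_in_borel:
  fixes J :: "'a::linorder_topology set"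
  assumes "ord_convex J"
  shows "J \<in> sets borel"
proof -
  let ?below = "{x. \<forall>j\<in>J. x < j}" and ?under = "{x. \<exists>j\<in>J. x \<le> j}"
  have borel: "?below \<in> sets borel" "?under \<in> sets borel"
    by (auto intro!: down_closed_in_borel dest: order.trans le_less_trans)
  have "J = (UNIV - ?below) \<inter> ?under"
  proof
    show "(UNIV - ?below) \<inter> ?under \<subseteq> J"
    proof
      fix x
      assume "x \<in> (UNIV - ?below) \<inter> ?under"
      then obtain j j' where "j \<in> J" "j' \<in> J" "j \<le> x" "x \<le> j'"
        by (auto simp: not_less)
      moreover from this assms have "{j..j'} \<subseteq> J"
        unfolding ord_convex_def by (meson order.trans)
      ultimately show "x \<in> J"
        by auto
    qed
  qed auto
  also have "\<dots> \<in> sets borel"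
    using borel by (intro sets.Int sets.Diff) auto
  finally show ?thesis .
qed

lemma finite_below_separated:
  fixes b :: "'a::linorder_topology"
  assumes "finite A" and "\<forall>a\<in>A. a < b"
  obtains U C where "open U" "closed C" "\<forall>a\<in>A. {..a} \<subseteq> U" "U \<subseteq> C" "C \<subseteq> {..<b}"
proof (cases "A = {}")
  case True
  then show ?thesis
    by (intro that[of "{}" "{}"]) auto
next
  case False
  define p where "p = Max A"
  have "p < b" "\<forall>a\<in>A. {..a} \<subseteq> {..p}"
    using assms False by (auto simp: p_def)
  show ?thesis
  proof (cases "\<exists>v. p < v \<and> v < b")
    case True
    then obtain v where "p < v" "v < b"
      by blast
    with \<open>\<forall>a\<in>A. {..a} \<subseteq> {..p}\<close> show ?thesis
      by (intro that[of "{..<v}" "{..v}"]) auto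
  next
    case False
    then have "{..p} = {..<b}"
      using \<open>p < b\<close> by (auto simp: not_less intro: antisym)
    then have "open {..p}"
      by simp
    with \<open>p < b\<close> \<open>\<forall>a\<in>A. {..a} \<subseteq> {..p}\<close> show ?thesis
      by (intro that[of "{..p}" "{..p}"]) auto
  qed
qed

context
  fixes I :: "'i set" and \<mu> :: "'i \<Rightarrow> 'a::linorder_topology smeasure"
  assumes compact_UNIV: "compact (UNIV :: 'a set)"
    and signed: "\<forall>i\<in>I. signed_regular_measure (\<mu> i)"
    and null: "weak_star_null I \<mu>"
begin

lemma abs_cdf_le_mod_c0_right:
  assumes "open U" "{..t} \<subseteq> U" "U - {..t} \<subseteq> Z" "Z \<in> sets borel"
  shows "le_mod_c0 I (\<lambda>i. \<bar>smeasure_of (\<mu> i) {..t}\<bar>) (\<lambda>i. total_variation (\<mu> i) Z)"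
  using assms by (intro weak_star_null_abs_smeasure_le_mod_c0[OF compact_UNIV signed null]) auto

lemma abs_cdf_le_mod_c0_left:
  assumes "closed C" "C \<subseteq> {..<t}" "{..t} - C \<subseteq> Z" "Z \<in> sets borel"
  shows "le_mod_c0 I (\<lambda>i. \<bar>smeasure_of (\<mu> i) {..t}\<bar>) (\<lambda>i. total_variation (\<mu> i) Z)"
  using assms
  by (intro weak_star_null_abs_smeasure_le_mod_c0[OF compact_UNIV signed null, where U = "{..<t}"])
    auto

lemma sum_abs_cdf_le_mod_c0_right_chain:
  assumes "finite S" "open U" "\<forall>t\<in>S. a \<le> t \<and> {..t} \<subseteq> U"
  shows "le_mod_c0 I (\<lambda>i. \<Sum>t\<in>S. \<bar>smeasure_of (\<mu> i) {..t}\<bar>) (\<lambda>i. total_variation (\<mu> i) (U \<inter> {a<..}))"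
  using assms
proof (induction S arbitrary: U rule: finite_linorder_max_induct)
  case empty
  then show ?case
    by (simp add: le_mod_c0_of_le total_variation_nonneg)
next
  case (insert b A)
  have "le_mod_c0 I (\<lambda>i. \<Sum>t\<in>A. \<bar>smeasure_of (\<mu> i) {..t}\<bar>)
      (\<lambda>i. total_variation (\<mu> i) (U \<inter> {..<b} \<inter> {a<..}))"
    using insert by (intro insert.IH) auto
  moreover have "le_mod_c0 I (\<lambda>i. \<bar>smeasure_of (\<mu> i) {..b}\<bar>)
      (\<lambda>i. total_variation (\<mu> i) (U \<inter> {b<..}))"
    using insert.prems by (intro abs_cdf_le_mod_c0_right) auto
  ultimately have "le_mod_c0 I
      (\<lambda>i. (\<Sum>t\<in>A. \<bar>smeasure_of (\<mu> i) {..t}\<bar>) + \<bar>smeasure_of (\<mu> i) {..b}\<bar>)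
      (\<lambda>i. total_variation (\<mu> i) (U \<inter> {..<b} \<inter> {a<..}) + total_variation (\<mu> i) (U \<inter> {b<..}))"
    by (rule le_mod_c0_add)
  then show ?case
  proof (rule le_mod_c0_mono)
    fix i
    assume "i \<in> I"
    show "(\<Sum>t\<in>insert b A. \<bar>smeasure_of (\<mu> i) {..t}\<bar>)
        \<le> (\<Sum>t\<in>A. \<bar>smeasure_of (\<mu> i) {..t}\<bar>) + \<bar>smeasure_of (\<mu> i) {..b}\<bar>"
      using insert.hyps by auto
    have "a \<le> b"
      using insert.prems by simp
    then show "total_variation (\<mu> i) (U \<inter> {..<b} \<inter> {a<..}) + total_variation (\<mu> i) (U \<inter> {b<..})
        \<le> total_variation (\<mu> i) (U \<inter> {a<..})"
      using insert.prems signed \<open>i \<in> I\<close>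
      by (intro total_variation_add_le) (auto intro: borel_open)
  qed
qed

lemma sum_abs_cdf_le_mod_c0_convex_two_points:
  assumes "ord_convex J" "finite S" "S \<subseteq> J" "\<exists>t\<in>S. \<exists>s\<in>S. t \<noteq> s"
  shows "le_mod_c0 I (\<lambda>i. \<Sum>t\<in>S. \<bar>smeasure_of (\<mu> i) {..t}\<bar>) (\<lambda>i. total_variation (\<mu> i) J)"
proof -
  define lo hi where "lo = Min S" and "hi = Max S"
  have "S \<noteq> {}"
    using assms(4) by auto
  then have "lo \<in> S" "hi \<in> S" "\<forall>t\<in>S. lo \<le> t \<and> t \<le> hi"
    using assms(2) by (auto simp: lo_def hi_def)
  moreover obtain t s where "t \<in> S" "s \<in> S" "t \<noteq> s"
    using assms(4) by blast
  ultimately have "lo < hi"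
    by (metis order.antisym order.strict_iff_order)
  define A where "A = S - {hi}"
  have "finite A" "lo \<in> A"
    using assms(2) \<open>lo \<in> S\<close> \<open>lo < hi\<close> by (simp_all add: A_def)
  have "\<forall>a\<in>A. a < hi"
    using \<open>\<forall>t\<in>S. lo \<le> t \<and> t \<le> hi\<close> by (auto simp: A_def order.strict_iff_order)
  obtain U C where UC: "open U" "closed C" "\<forall>a\<in>A. {..a} \<subseteq> U" "U \<subseteq> C" "C \<subseteq> {..<hi}"
    using finite_below_separated[OF \<open>finite A\<close> \<open>\<forall>a\<in>A. a < hi\<close>] by blast
  have "le_mod_c0 I (\<lambda>i. \<Sum>t\<in>A. \<bar>smeasure_of (\<mu> i) {..t}\<bar>) (\<lambda>i. total_variation (\<mu> i) (U \<inter> {lo<..}))"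
    using \<open>finite A\<close> UC \<open>\<forall>t\<in>S. lo \<le> t \<and> t \<le> hi\<close>
    by (intro sum_abs_cdf_le_mod_c0_right_chain) (auto simp: A_def)
  moreover have "le_mod_c0 I (\<lambda>i. \<bar>smeasure_of (\<mu> i) {..hi}\<bar>)
      (\<lambda>i. total_variation (\<mu> i) ({..hi} - C))"
    using UC by (intro abs_cdf_le_mod_c0_left) (auto intro!: borel_closed)
  ultimately have "le_mod_c0 I
      (\<lambda>i. (\<Sum>t\<in>A. \<bar>smeasure_of (\<mu> i) {..t}\<bar>) + \<bar>smeasure_of (\<mu> i) {..hi}\<bar>)
      (\<lambda>i. total_variation (\<mu> i) (U \<inter> {lo<..}) + total_variation (\<mu> i) ({..hi} - C))"
    by (rule le_mod_c0_add)
  then show ?thesis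
  proof (rule le_mod_c0_mono)
    fix i
    assume "i \<in> I"
    show "(\<Sum>t\<in>S. \<bar>smeasure_of (\<mu> i) {..t}\<bar>)
        \<le> (\<Sum>t\<in>A. \<bar>smeasure_of (\<mu> i) {..t}\<bar>) + \<bar>smeasure_of (\<mu> i) {..hi}\<bar>"
      unfolding A_def sum.remove[OF assms(2) \<open>hi \<in> S\<close>] by simp
    have "{lo..hi} \<subseteq> J"
      using assms(1,3) \<open>lo \<in> S\<close> \<open>hi \<in> S\<close> \<open>lo < hi\<close> unfolding ord_convex_def
      by (meson less_imp_le subsetD)
    moreover have "U \<subseteq> {..<hi}" "{..lo} \<subseteq> C"
      using UC \<open>lo \<in> A\<close> by blast+
    then have "U \<inter> {lo<..} \<subseteq> {lo..hi}" "{..hi} - C \<subseteq> {lo..hi}"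
      by (auto dest: less_imp_le simp: subset_eq not_le)
    ultimately have "U \<inter> {lo<..} \<subseteq> J" "{..hi} - C \<subseteq> J"
      by blast+
    then show "total_variation (\<mu> i) (U \<inter> {lo<..}) + total_variation (\<mu> i) ({..hi} - C)
        \<le> total_variation (\<mu> i) J"
      using UC signed \<open>i \<in> I\<close> ord_convex_in_borel[OF assms(1)]
      by (intro total_variation_add_le) (auto intro!: borel_closed borel_open)
  qed
qed

lemma sum_abs_cdf_le_mod_c0_open:
  assumes "finite S" "open G" "S \<subseteq> G"
  shows "le_mod_c0 I (\<lambda>i. \<Sum>t\<in>S. \<bar>smeasure_of (\<mu> i) {..t}\<bar>) (\<lambda>i. total_variation (\<mu> i) G / 2)"
  using assms
proof (induction S arbitrary: G rule: finite_linorder_max_induct)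
  case empty
  then show ?case
    by (simp add: le_mod_c0_of_le total_variation_nonneg)
next
  case (insert b A)
  obtain U C where UC: "open U" "closed C" "\<forall>a\<in>A. {..a} \<subseteq> U" "U \<subseteq> C" "C \<subseteq> {..<b}"
    using finite_below_separated[OF insert.hyps] by blast
  have "b \<in> G"
    using insert.prems by simp
  define L R where "L = G \<inter> {..b} - C" and "R = G \<inter> {b<..}"
  have borel: "L \<in> sets borel" "R \<in> sets borel" "G \<inter> U \<in> sets borel" "G \<in> sets borel"
    using UC insert.prems by (auto simp: L_def R_def intro: borel_open borel_closed)
  have "le_mod_c0 I (\<lambda>i. \<Sum>t\<in>A. \<bar>smeasure_of (\<mu> i) {..t}\<bar>) (\<lambda>i. total_variation (\<mu> i) (G \<inter> U) / 2)"
    using insert.prems UC by (intro insert.IH) auto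
  moreover have "le_mod_c0 I (\<lambda>i. \<bar>smeasure_of (\<mu> i) {..b}\<bar>) (\<lambda>i. total_variation (\<mu> i) L)"
  proof (rule abs_cdf_le_mod_c0_left)
    show "closed (C \<union> ({..b} - G))"
      using UC insert.prems by (intro closed_Un closed_Diff) auto
    show "C \<union> ({..b} - G) \<subseteq> {..<b}"
      using UC \<open>b \<in> G\<close> by (auto simp: order.order_iff_strict)
  qed (use borel in \<open>auto simp: L_def\<close>)
  moreover have "le_mod_c0 I (\<lambda>i. \<bar>smeasure_of (\<mu> i) {..b}\<bar>) (\<lambda>i. total_variation (\<mu> i) R)"
  proof (rule abs_cdf_le_mod_c0_right)
    show "{..b} \<subseteq> G \<union> {..<b}"
      using \<open>b \<in> G\<close> by (auto simp: order.order_iff_strict)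
  qed (use borel insert.prems in \<open>auto simp: R_def\<close>)
  ultimately have "le_mod_c0 I
      (\<lambda>i. \<bar>smeasure_of (\<mu> i) {..b}\<bar> + (\<Sum>t\<in>A. \<bar>smeasure_of (\<mu> i) {..t}\<bar>))
      (\<lambda>i. (total_variation (\<mu> i) L + total_variation (\<mu> i) R) / 2
        + total_variation (\<mu> i) (G \<inter> U) / 2)"
    by (intro le_mod_c0_add le_mod_c0_average)
  then show ?case
  proof (rule le_mod_c0_mono)
    fix i
    assume "i \<in> I"
    then have "signed_regular_measure (\<mu> i)"
      using signed by blast
    show "(\<Sum>t\<in>insert b A. \<bar>smeasure_of (\<mu> i) {..t}\<bar>)
        \<le> \<bar>smeasure_of (\<mu> i) {..b}\<bar> + (\<Sum>t\<in>A. \<bar>smeasure_of (\<mu> i) {..t}\<bar>)"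
      using insert.hyps by auto
    have "total_variation (\<mu> i) L + total_variation (\<mu> i) R = total_variation (\<mu> i) (L \<union> R)"
      using borel by (intro total_variation_Un[symmetric] \<open>signed_regular_measure (\<mu> i)\<close>)
        (auto simp: L_def R_def)
    also have "\<dots> + total_variation (\<mu> i) (G \<inter> U) \<le> total_variation (\<mu> i) G"
      using borel UC by (intro total_variation_add_le \<open>signed_regular_measure (\<mu> i)\<close>)
        (auto simp: L_def R_def)
    finally show "(total_variation (\<mu> i) L + total_variation (\<mu> i) R) / 2
        + total_variation (\<mu> i) (G \<inter> U) / 2 \<le> total_variation (\<mu> i) G / 2"
      by (simp add: field_simps)
  qed
qed

end

theorem proposition2p14:
  fixes I :: "'i set" and F :: "'i \<Rightarrow> 'a::linorder_topology \<Rightarrow> real"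
    and \<mu> :: "'i \<Rightarrow> 'a smeasure" and J S :: "'a set"
  assumes "compact (UNIV :: 'a set)"
    and "\<forall>i\<in>I. F i \<in> NBV"
    and "\<forall>i\<in>I. associated_measure (F i) (\<mu> i)"
    and "weak_star_null I \<mu>"
    and "ord_convex J"
    and "finite S" and "S \<subseteq> J"
  shows "((\<exists>t\<in>J. \<exists>s\<in>J. t \<noteq> s) \<longrightarrow>
            le_mod_c0 I (\<lambda>i. \<Sum>t\<in>S. \<bar>F i t\<bar>) (\<lambda>i. total_variation (\<mu> i) J))
       \<and> (open J \<longrightarrow>
            le_mod_c0 I (\<lambda>i. \<Sum>t\<in>S. \<bar>F i t\<bar>) (\<lambda>i. total_variation (\<mu> i) J / 2))"
proof -
  have signed: "\<forall>i\<in>I. signed_regular_measure (\<mu> i)"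
    and cdf: "\<And>i t. i \<in> I \<Longrightarrow> F i t = smeasure_of (\<mu> i) {..t}"
    using assms(3) unfolding associated_measure_def by blast+
  note cdf_estimates = sum_abs_cdf_le_mod_c0_convex_two_points[OF assms(1) signed assms(4)]
    sum_abs_cdf_le_mod_c0_open[OF assms(1) signed assms(4)]
  show ?thesis
  proof (intro conjI impI)
    assume "\<exists>t\<in>J. \<exists>s\<in>J. t \<noteq> s"
    then obtain u v where "u \<in> J" "v \<in> J" "u \<noteq> v"
      by blast
    with assms(5-7) have "le_mod_c0 I
        (\<lambda>i. \<Sum>t\<in>insert u (insert v S). \<bar>smeasure_of (\<mu> i) {..t}\<bar>)
        (\<lambda>i. total_variation (\<mu> i) J)"
      by (intro cdf_estimates(1)) auto
    then show "le_mod_c0 I (\<lambda>i. \<Sum>t\<in>S. \<bar>F i t\<bar>) (\<lambda>i. total_variation (\<mu> i) J)"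
      by (rule le_mod_c0_mono) (auto simp: cdf assms(6) intro: sum_mono2)
  next
    assume "open J"
    from cdf_estimates(2)[OF assms(6) this assms(7)]
    show "le_mod_c0 I (\<lambda>i. \<Sum>t\<in>S. \<bar>F i t\<bar>) (\<lambda>i. total_variation (\<mu> i) J / 2)"
      by (rule le_mod_c0_mono) (simp_all add: cdf)
  qed
qed

end
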